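(* Let $\tau>1$, let $\kappa\ge3$ be an integer and let $x^\dagger\in\mathcal X$ satisfy $\bar k^\delta_{\mathrm{pr}}(x^\dagger)\ge\kappa$. Then on the event $\Omega_\kappa$, writing $k^\delta_{\mathrm{pr}}=k^\delta_{\mathrm{pr}}(x^\dagger)$, $$\sum_{j=k^\delta_{\mathrm{dp}}+1}^{k^\delta_{\mathrm{pr}}}(y^\dagger,u_j)^2\le\frac{(3\tau+1)^2}{4}\,k^\delta_{\mathrm{pr}}\,\delta^2,$$ where the sum is $0$ if $k^\delta_{\mathrm{dp}}\ge k^\delta_{\mathrm{pr}}$.
   Context: Setting: $K:\mathcal X\to\mathcal Y$ compact injective with dense range between infinite-dimensional real separable Hilbert spaces, singular system $(\sigma_j,v_j,u_j)$ ($(v_j),(u_j)$ orthonormal bases, $\sigma_1\ge\sigma_2\ge\dots>0$, $Kv_j=\sigma_ju_j$, $K^*u_j=\sigma_jv_j$); $y^\dagger=Kx^\dagger$, $\delta>0$, data $(y^\delta,u_j):=(y^\dagger,u_j)+\delta(Z,u_j)$ with real random variables $(Z,u_j)$. For $m\in\mathbb N$: $k^\delta_{\mathrm{dp}}(m):=\min\{k\in\{0,\dots,m\}:\sqrt{\sum_{j=k+1}^m(y^\delta,u_j)^2}\le\tau\sqrt m\,\delta\}$, $k^\delta_{\mathrm{dp}}:=\sup_{m\in\mathbb N}k^\delta_{\mathrm{dp}}(m)$. With $\min\emptyset=\infty$: $k^\delta_{\mathrm{pr}}(x^\dagger):=\min\{k\in\mathbb N_0:\sum_{j=1}^k(y^\delta-y^\dagger,u_j)^2\ge\sum_{j=k+1}^\infty(y^\dagger,u_j)^2\}$,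 $\bar k^\delta_{\mathrm{pr}}(x^\dagger):=\min\{k\in\mathbb N_0:\delta^2k\ge\sum_{j=k+1}^\infty(y^\dagger,u_j)^2\}$. With $\varepsilon_\tau:=\min\big(\frac{(\tau+1)^2}{4}-1,\frac13\big)$, $$\Omega_\kappa:=\Big\{\Big|\sum_{j=1}^m(y^\delta-y^\dagger,u_j)^2-m\delta^2\Big|\le\varepsilon_\tau m\delta^2\ \text{for all integers } m\ge\kappa/3\Big\}.$$ *)

theory Defs
  imports "HOL-Analysis.Analysis" "HOL-Library.Extended_Nat"
begin

text \<open>Coefficient sequences are indexed by j = 1, 2, ...; the value at index 0 is never used.
  yd j stands for the data coefficient (y^delta, u_j), c j for (y^dagger, u_j).\<close>

definition compact_op :: "('a::real_normed_vector \<Rightarrow> 'b::real_normed_vector) \<Rightarrow> bool" where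
  "compact_op K \<longleftrightarrow> bounded_linear K \<and> (\<forall>S. bounded S \<longrightarrow> compact (closure (K ` S)))"

definition k_dp_m :: "real \<Rightarrow> real \<Rightarrow> (nat \<Rightarrow> real) \<Rightarrow> nat \<Rightarrow> nat" where
  "k_dp_m \<tau> \<delta> yd m =
     (LEAST k. k \<le> m \<and> sqrt (\<Sum>j\<in>{k+1..m}. (yd j)\<^sup>2) \<le> \<tau> * sqrt (real m) * \<delta>)"

definition k_dp :: "real \<Rightarrow> real \<Rightarrow> (nat \<Rightarrow> real) \<Rightarrow> enat" where
  "k_dp \<tau> \<delta> yd = (SUP m\<in>{1..}. enat (k_dp_m \<tau> \<delta> yd m))"

definition tail_sq :: "(nat \<Rightarrow> real) \<Rightarrow> nat \<Rightarrow> real" where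
  "tail_sq c k = (\<Sum>i. (c (i + k + 1))\<^sup>2)"

definition min_inf :: "(nat \<Rightarrow> bool) \<Rightarrow> enat" where
  "min_inf P = (if \<exists>k. P k then enat (LEAST k. P k) else \<infinity>)"

definition k_pr :: "(nat \<Rightarrow> real) \<Rightarrow> (nat \<Rightarrow> real) \<Rightarrow> enat" where
  "k_pr yd c = min_inf (\<lambda>k. (\<Sum>j\<in>{1..k}. (yd j - c j)\<^sup>2) \<ge> tail_sq c k)"

definition k_pr_bar :: "real \<Rightarrow> (nat \<Rightarrow> real) \<Rightarrow> enat" where
  "k_pr_bar \<delta> c = min_inf (\<lambda>k. \<delta>\<^sup>2 * real k \<ge> tail_sq c k)"

definition eps_tau :: "real \<Rightarrow> real" where
  "eps_tau \<tau> = min ((\<tau> + 1)\<^sup>2 / 4 - 1) (1/3)"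

definition Omega :: "real \<Rightarrow> real \<Rightarrow> nat \<Rightarrow> (nat \<Rightarrow> real) \<Rightarrow> (nat \<Rightarrow> real) \<Rightarrow> bool" where
  "Omega \<tau> \<delta> \<kappa> yd c \<longleftrightarrow>
     (\<forall>m::nat. real m \<ge> real \<kappa> / 3 \<longrightarrow>
        \<bar>(\<Sum>j\<in>{1..m}. (yd j - c j)\<^sup>2) - real m * \<delta>\<^sup>2\<bar> \<le> eps_tau \<tau> * real m * \<delta>\<^sup>2)"

end

theory Submission
  imports Defs
begin

text \<open>Only square summability of the exact coefficients \<open>c\<^sub>j = (y\<^sup>\<dagger>, u\<^sub>j)\<close> matters. On \<open>\<Omega>\<^sub>\<kappa>\<close> the noise energy of the first m coefficients is
  \<open>(1 \<plusminus> \<epsilon>\<^sub>\<tau>) m \<delta>\<^sup>2\<close> for \<open>m \<ge> \<kappa>/3\<close>. As the tail of \<open>c\<close> tends to 0, the stopping index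
  \<open>k\<^sub>p\<^sub>r\<close> is finite, and it is at least \<open>\<kappa>/3\<close> because below \<open>\<kappa>\<close> the tail exceeds \<open>\<delta>\<^sup>2 k\<close>.
  The discrepancy principle run on the first \<open>m = k\<^sub>p\<^sub>r\<close> coefficients stops at some
  \<open>k\<^sub>d\<^sub>p(m) \<le> k\<^sub>d\<^sub>p\<close>, and on the coefficients \<open>k\<^sub>d\<^sub>p(m)+1, \<dots>, m\<close> the triangle inequality bounds the
  signal by the residual \<open>\<tau> \<surd>m \<delta>\<close> plus the noise \<open>(\<tau>+1)/2 \<surd>m \<delta>\<close>.\<close>

lemma tail_sq_Suc:
  assumes "summable (\<lambda>j. (c (Suc j))\<^sup>2)"
  shows "tail_sq c (Suc k) = tail_sq c k - (c (Suc k))\<^sup>2"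
proof -
  have "summable (\<lambda>i. (c (Suc (i + k)))\<^sup>2)"
    using summable_iff_shift[of "\<lambda>i. (c (Suc i))\<^sup>2" k] assms by simp
  from suminf_split_head[OF this] show ?thesis
    by (simp add: tail_sq_def)
qed

lemma tail_sq_antimono:
  assumes "summable (\<lambda>j. (c (Suc j))\<^sup>2)" and "k \<le> k'"
  shows "tail_sq c k' \<le> tail_sq c k"
proof -
  have "decseq (tail_sq c)"
    by (rule decseq_SucI) (simp add: tail_sq_Suc[OF assms(1)])
  with assms(2) show ?thesis
    by (simp add: decseq_def)
qed

lemma tail_sq_eventually_less:
  assumes "summable (\<lambda>j. (c (Suc j))\<^sup>2)" and "r > 0"
  shows "\<exists>N. \<forall>n\<ge>N. tail_sq c n < r"
proof -
  have "tail_sq c n = (\<Sum>i. (c (Suc (i + n)))\<^sup>2)" for n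
    by (simp add: tail_sq_def)
  with suminf_exist_split[OF assms(2,1)] show ?thesis
    by (metis abs_less_iff real_norm_def)
qed

lemma min_inf_eq_Least:
  assumes "P k"
  shows "min_inf P = enat (LEAST k. P k)"
  using assms by (auto simp: min_inf_def)

lemma tail_sq_gt_below_k_pr_bar:
  assumes "k_pr_bar \<delta> c \<ge> enat \<kappa>" and "k < \<kappa>"
  shows "tail_sq c k > \<delta>\<^sup>2 * real k"
proof (rule ccontr)
  assume "\<not> ?thesis"
  then have P: "\<delta>\<^sup>2 * real k \<ge> tail_sq c k" by simp
  then have "\<kappa> \<le> (LEAST k. \<delta>\<^sup>2 * real k \<ge> tail_sq c k)"
    using assms(1) by (simp add: k_pr_bar_def min_inf_eq_Least)
  also have "\<dots> \<le> k" using P by (rule Least_le)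
  finally show False using assms(2) by simp
qed

lemma eps_tau_le_third: "eps_tau \<tau> \<le> 1/3"
  by (simp add: eps_tau_def min_def)

lemma one_plus_eps_tau_le: "1 + eps_tau \<tau> \<le> ((\<tau> + 1) / 2)\<^sup>2"
  by (simp add: eps_tau_def min_def power_divide)

lemma Omega_noise_bounds:
  assumes "Omega \<tau> \<delta> \<kappa> (\<lambda>j. c j + e j) c" and "real m \<ge> real \<kappa> / 3"
  shows "(1 - eps_tau \<tau>) * real m * \<delta>\<^sup>2 \<le> (\<Sum>j\<in>{1..m}. (e j)\<^sup>2)"
    and "(\<Sum>j\<in>{1..m}. (e j)\<^sup>2) \<le> (1 + eps_tau \<tau>) * real m * \<delta>\<^sup>2"
  using assms unfolding Omega_def by (auto simp: algebra_simps abs_le_iff)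

lemma noise_dominates_tail_eventually:
  assumes "summable (\<lambda>j. (c (Suc j))\<^sup>2)" and "\<delta> > 0"
    and "Omega \<tau> \<delta> \<kappa> (\<lambda>j. c j + e j) c"
  shows "\<exists>k. tail_sq c k \<le> (\<Sum>j\<in>{1..k}. (e j)\<^sup>2)"
proof -
  have "\<delta>\<^sup>2 / 2 > 0" using assms(2) by simp
  then obtain N where N: "\<forall>n\<ge>N. tail_sq c n < \<delta>\<^sup>2 / 2"
    using tail_sq_eventually_less[OF assms(1)] by blast
  define k where "k = max N (max \<kappa> 3)"
  have "N \<le> k" "\<kappa> \<le> k" "3 \<le> k" unfolding k_def by simp_all
  then have k: "real k \<ge> real \<kappa> / 3" "real k \<ge> 3" and small_tail: "tail_sq c k < \<delta>\<^sup>2 / 2"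
    using N by simp_all
  note small_tail
  also have "\<delta>\<^sup>2 / 2 \<le> (1 - eps_tau \<tau>) * real k * \<delta>\<^sup>2"
  proof -
    have "2/3 * 3 \<le> (1 - eps_tau \<tau>) * real k"
      by (rule mult_mono) (use eps_tau_le_third[of \<tau>] k(2) in simp_all)
    then have "2 * \<delta>\<^sup>2 \<le> (1 - eps_tau \<tau>) * real k * \<delta>\<^sup>2"
      using mult_right_mono[of _ _ "\<delta>\<^sup>2"] by simp
    then show ?thesis using zero_le_power2[of \<delta>] by linarith
  qed
  also have "\<dots> \<le> (\<Sum>j\<in>{1..k}. (e j)\<^sup>2)" by (rule Omega_noise_bounds(1)[OF assms(3) k(1)])
  finally have "tail_sq c k \<le> (\<Sum>j\<in>{1..k}. (e j)\<^sup>2)" by simp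
  then show ?thesis ..
qed

lemma k_pr_eq_Least:
  assumes "summable (\<lambda>j. (c (Suc j))\<^sup>2)" and "\<delta> > 0"
    and "Omega \<tau> \<delta> \<kappa> (\<lambda>j. c j + e j) c"
  shows "k_pr (\<lambda>j. c j + e j) c = enat (LEAST k. tail_sq c k \<le> (\<Sum>j\<in>{1..k}. (e j)\<^sup>2))"
proof -
  obtain k where "tail_sq c k \<le> (\<Sum>j\<in>{1..k}. (e j)\<^sup>2)"
    using noise_dominates_tail_eventually[OF assms] ..
  then show ?thesis
    unfolding k_pr_def add_diff_cancel_left' by (rule min_inf_eq_Least)
qed

lemma ceiling_div3_bounds:
  fixes \<kappa> :: nat
  assumes "\<kappa> \<ge> 3"
  shows "\<kappa> \<le> 3 * ((\<kappa> + 2) div 3)" and "4 * ((\<kappa> + 2) div 3) \<le> 3 * (\<kappa> - 1)"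
proof -
  have m0: "3 * ((\<kappa> + 2) div 3) + (\<kappa> + 2) mod 3 = \<kappa> + 2" "(\<kappa> + 2) mod 3 < 3"
    by simp_all
  then show "\<kappa> \<le> 3 * ((\<kappa> + 2) div 3)" by linarith
  show "4 * ((\<kappa> + 2) div 3) \<le> 3 * (\<kappa> - 1)"
  proof (cases "\<kappa> = 3")
    case False
    then show ?thesis using m0 assms by linarith
  qed simp
qed

text \<open>The witness \<open>m\<^sub>0 = \<lceil>\<kappa>/3\<rceil>\<close> lies in the range of \<open>\<Omega>\<^sub>\<kappa>\<close> and satisfies \<open>4 m\<^sub>0 \<le> 3 (\<kappa> - 1)\<close>
  (here \<open>\<kappa> \<ge> 3\<close> is needed), so \<open>(1 + \<epsilon>\<^sub>\<tau>) m\<^sub>0 \<delta>\<^sup>2 \<le> \<delta>\<^sup>2 (\<kappa> - 1) < tail(\<kappa> - 1)\<close>.\<close>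
lemma noise_dominates_tail_imp_ge_third:
  assumes "summable (\<lambda>j. (c (Suc j))\<^sup>2)" and "\<kappa> \<ge> 3"
    and "k_pr_bar \<delta> c \<ge> enat \<kappa>" and "Omega \<tau> \<delta> \<kappa> (\<lambda>j. c j + e j) c"
    and dominates: "tail_sq c k \<le> (\<Sum>j\<in>{1..k}. (e j)\<^sup>2)"
  shows "real k \<ge> real \<kappa> / 3"
proof (rule ccontr)
  assume "\<not> ?thesis"
  then have small: "3 * k < \<kappa>" by linarith
  define m0 where "m0 = (\<kappa> + 2) div 3"
  have "3 * m0 \<ge> \<kappa>" and m0_le: "4 * m0 \<le> 3 * (\<kappa> - 1)"
    unfolding m0_def using ceiling_div3_bounds[OF assms(2)] by simp_all
  then have m0: "real m0 \<ge> real \<kappa> / 3" "k \<le> m0" using small by linarith+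
  have "\<delta>\<^sup>2 * real (\<kappa> - 1) < tail_sq c (\<kappa> - 1)"
    by (rule tail_sq_gt_below_k_pr_bar[OF assms(3)]) (use assms(2) in simp)
  also have "\<dots> \<le> tail_sq c k" using tail_sq_antimono[OF assms(1)] small by simp
  also have "\<dots> \<le> (\<Sum>j\<in>{1..k}. (e j)\<^sup>2)" by (rule dominates)
  also have "\<dots> \<le> (\<Sum>j\<in>{1..m0}. (e j)\<^sup>2)"
    by (intro sum_mono2) (use m0(2) in auto)
  also have "\<dots> \<le> (1 + eps_tau \<tau>) * real m0 * \<delta>\<^sup>2"
    by (rule Omega_noise_bounds(2)[OF assms(4) m0(1)])
  also have "\<dots> \<le> (4/3) * real m0 * \<delta>\<^sup>2"
    using eps_tau_le_third[of \<tau>] by (intro mult_right_mono) auto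
  also have "\<dots> \<le> \<delta>\<^sup>2 * real (\<kappa> - 1)"
  proof -
    have "(4/3) * real m0 * \<delta>\<^sup>2 \<le> real (\<kappa> - 1) * \<delta>\<^sup>2"
      by (rule mult_right_mono) (use m0_le in linarith, simp)
    then show ?thesis by (simp only: mult.commute[of "\<delta>\<^sup>2" "real (\<kappa> - 1)"])
  qed
  finally show False by simp
qed

lemma k_dp_m_spec:
  assumes "\<tau> \<ge> 0" and "\<delta> \<ge> 0"
  shows "k_dp_m \<tau> \<delta> yd m \<le> m"
    and "sqrt (\<Sum>j\<in>{k_dp_m \<tau> \<delta> yd m + 1..m}. (yd j)\<^sup>2) \<le> \<tau> * sqrt (real m) * \<delta>"
proof -
  have "m \<le> m \<and> sqrt (\<Sum>j\<in>{m+1..m}. (yd j)\<^sup>2) \<le> \<tau> * sqrt (real m) * \<delta>"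
    using assms by simp
  from LeastI[of "\<lambda>k. k \<le> m \<and> sqrt (\<Sum>j\<in>{k+1..m}. (yd j)\<^sup>2) \<le> \<tau> * sqrt (real m) * \<delta>", OF this]
  show "k_dp_m \<tau> \<delta> yd m \<le> m"
    and "sqrt (\<Sum>j\<in>{k_dp_m \<tau> \<delta> yd m + 1..m}. (yd j)\<^sup>2) \<le> \<tau> * sqrt (real m) * \<delta>"
    unfolding k_dp_m_def by blast+
qed

lemma k_dp_m_le_k_dp:
  assumes "m \<ge> 1"
  shows "enat (k_dp_m \<tau> \<delta> yd m) \<le> k_dp \<tau> \<delta> yd"
  unfolding k_dp_def using assms by (intro SUP_upper) auto

lemma sum_sq_diff_le:
  fixes a b :: "'a \<Rightarrow> real"
  assumes "sqrt (\<Sum>j\<in>A. (a j)\<^sup>2) \<le> \<alpha>" and "sqrt (\<Sum>j\<in>A. (b j)\<^sup>2) \<le> \<beta>"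
  shows "(\<Sum>j\<in>A. (a j - b j)\<^sup>2) \<le> (\<alpha> + \<beta>)\<^sup>2"
proof -
  have "L2_set (\<lambda>j. a j - b j) A \<le> L2_set a A + L2_set (\<lambda>j. - b j) A"
    using L2_set_triangle_ineq[of a "\<lambda>j. - b j" A] by simp
  also have "\<dots> \<le> \<alpha> + \<beta>" using assms by (simp add: L2_set_def)
  finally have "(L2_set (\<lambda>j. a j - b j) A)\<^sup>2 \<le> (\<alpha> + \<beta>)\<^sup>2"
    by (intro power_mono) simp_all
  then show ?thesis by (simp add: L2_set_def sum_nonneg)
qed

lemma signal_bound_after_k_dp_m:
  assumes "\<delta> > 0" and "\<tau> > 1"
    and "Omega \<tau> \<delta> \<kappa> (\<lambda>j. c j + e j) c" and "real m \<ge> real \<kappa> / 3"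
  shows "(\<Sum>j\<in>{k_dp_m \<tau> \<delta> (\<lambda>j. c j + e j) m + 1..m}. (c j)\<^sup>2)
           \<le> (3 * \<tau> + 1)\<^sup>2 / 4 * real m * \<delta>\<^sup>2"
proof -
  define A where "A = {k_dp_m \<tau> \<delta> (\<lambda>j. c j + e j) m + 1..m}"
  have residual: "sqrt (\<Sum>j\<in>A. (c j + e j)\<^sup>2) \<le> \<tau> * sqrt (real m) * \<delta>"
    unfolding A_def using k_dp_m_spec(2) assms(1,2) by simp
  have "sqrt (\<Sum>j\<in>A. (e j)\<^sup>2) \<le> sqrt (\<Sum>j\<in>{1..m}. (e j)\<^sup>2)"
    by (intro real_sqrt_le_mono sum_mono2) (auto simp: A_def)
  also have "\<dots> \<le> sqrt (((\<tau> + 1) / 2)\<^sup>2 * real m * \<delta>\<^sup>2)"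
    using Omega_noise_bounds(2)[OF assms(3,4)] one_plus_eps_tau_le[of \<tau>]
      mult_right_mono[of "1 + eps_tau \<tau>" "((\<tau> + 1) / 2)\<^sup>2" "real m * \<delta>\<^sup>2"]
    by (simp add: mult.assoc)
  also have "\<dots> = (\<tau> + 1) / 2 * sqrt (real m) * \<delta>"
    using assms(1,2) by (simp add: real_sqrt_mult)
  finally have noise: "sqrt (\<Sum>j\<in>A. (e j)\<^sup>2) \<le> (\<tau> + 1) / 2 * sqrt (real m) * \<delta>" .
  have "(\<Sum>j\<in>A. (c j)\<^sup>2)
          \<le> (\<tau> * sqrt (real m) * \<delta> + (\<tau> + 1) / 2 * sqrt (real m) * \<delta>)\<^sup>2"
    using sum_sq_diff_le[OF residual noise] by simp
  also have "\<dots> = (3 * \<tau> + 1)\<^sup>2 / 4 * real m * \<delta>\<^sup>2"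
    by (simp add: field_simps power2_eq_square)
  finally show ?thesis unfolding A_def .
qed

theorem k_dp_signal_bound:
  fixes c e :: "nat \<Rightarrow> real"
  assumes summable: "summable (\<lambda>j. (c (Suc j))\<^sup>2)"
    and \<delta>_pos: "\<delta> > 0" and \<tau>_gt: "\<tau> > 1" and \<kappa>_ge: "\<kappa> \<ge> 3"
    and kbar: "k_pr_bar \<delta> c \<ge> enat \<kappa>"
    and event: "Omega \<tau> \<delta> \<kappa> (\<lambda>j. c j + e j) c"
  shows "\<exists>kpr::nat.
           k_pr (\<lambda>j. c j + e j) c = enat kpr \<and>
           (\<Sum>j\<in>{j. k_dp \<tau> \<delta> (\<lambda>j. c j + e j) < enat j \<and> j \<le> kpr}. (c j)\<^sup>2)
             \<le> (3 * \<tau> + 1)\<^sup>2 / 4 * real kpr * \<delta>\<^sup>2"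
proof (intro exI conjI)
  define kpr where "kpr = (LEAST k. tail_sq c k \<le> (\<Sum>j\<in>{1..k}. (e j)\<^sup>2))"
  show "k_pr (\<lambda>j. c j + e j) c = enat kpr"
    unfolding kpr_def by (rule k_pr_eq_Least[OF summable \<delta>_pos event])
  have "tail_sq c kpr \<le> (\<Sum>j\<in>{1..kpr}. (e j)\<^sup>2)"
    unfolding kpr_def by (rule LeastI_ex[OF noise_dominates_tail_eventually[OF summable \<delta>_pos event]])
  then have kpr_ge: "real kpr \<ge> real \<kappa> / 3"
    by (rule noise_dominates_tail_imp_ge_third[OF summable \<kappa>_ge kbar event])
  then have "enat (k_dp_m \<tau> \<delta> (\<lambda>j. c j + e j) kpr) \<le> k_dp \<tau> \<delta> (\<lambda>j. c j + e j)"
    using \<kappa>_ge by (intro k_dp_m_le_k_dp) linarith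
  then have "{j. k_dp \<tau> \<delta> (\<lambda>j. c j + e j) < enat j \<and> j \<le> kpr}
               \<subseteq> {k_dp_m \<tau> \<delta> (\<lambda>j. c j + e j) kpr + 1..kpr}"
    by (auto dest: le_less_trans)
  then have "(\<Sum>j\<in>{j. k_dp \<tau> \<delta> (\<lambda>j. c j + e j) < enat j \<and> j \<le> kpr}. (c j)\<^sup>2)
               \<le> (\<Sum>j\<in>{k_dp_m \<tau> \<delta> (\<lambda>j. c j + e j) kpr + 1..kpr}. (c j)\<^sup>2)"
    by (intro sum_mono2) auto
  also have "\<dots> \<le> (3 * \<tau> + 1)\<^sup>2 / 4 * real kpr * \<delta>\<^sup>2"
    by (rule signal_bound_after_k_dp_m[OF \<delta>_pos \<tau>_gt event kpr_ge])
  finally show "(\<Sum>j\<in>{j. k_dp \<tau> \<delta> (\<lambda>j. c j + e j) < enat j \<and> j \<le> kpr}. (c j)\<^sup>2)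
                  \<le> (3 * \<tau> + 1)\<^sup>2 / 4 * real kpr * \<delta>\<^sup>2" .
qed

theorem mainTheorem12:
  fixes K :: "'x::{real_inner,complete_space} \<Rightarrow> 'y::{real_inner,complete_space}"
    and \<sigma> :: "nat \<Rightarrow> real" and v :: "nat \<Rightarrow> 'x" and u :: "nat \<Rightarrow> 'y"
    and xdag :: 'x and \<delta> \<tau> :: real and Z :: "nat \<Rightarrow> real" and \<kappa> :: nat
  assumes K_compact: "compact_op K"
    and K_inj: "inj K"
    and K_dense: "closure (range K) = UNIV"
    and v_orth: "\<And>i j. i \<ge> 1 \<Longrightarrow> j \<ge> 1 \<Longrightarrow> v i \<bullet> v j = (if i = j then 1 else 0)"
    and u_orth: "\<And>i j. i \<ge> 1 \<Longrightarrow> j \<ge> 1 \<Longrightarrow> u i \<bullet> u j = (if i = j then 1 else 0)"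
    and v_basis: "\<And>x. (\<lambda>j. (x \<bullet> v (Suc j))\<^sup>2) sums (norm x)\<^sup>2"
    and u_basis: "\<And>y. (\<lambda>j. (y \<bullet> u (Suc j))\<^sup>2) sums (norm y)\<^sup>2"
    and \<sigma>_pos: "\<And>j. j \<ge> 1 \<Longrightarrow> \<sigma> j > 0"
    and \<sigma>_mono: "\<And>j. j \<ge> 1 \<Longrightarrow> \<sigma> (Suc j) \<le> \<sigma> j"
    and K_v: "\<And>j. j \<ge> 1 \<Longrightarrow> K (v j) = \<sigma> j *\<^sub>R u j"
    and Kadj_u: "\<And>x j. j \<ge> 1 \<Longrightarrow> K x \<bullet> u j = \<sigma> j * (x \<bullet> v j)"
    and \<delta>_pos: "\<delta> > 0"
    and \<tau>_gt: "\<tau> > 1"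
    and \<kappa>_ge: "\<kappa> \<ge> 3"
    and kbar: "k_pr_bar \<delta> (\<lambda>j. K xdag \<bullet> u j) \<ge> enat \<kappa>"
    and event: "Omega \<tau> \<delta> \<kappa> (\<lambda>j. K xdag \<bullet> u j + \<delta> * Z j) (\<lambda>j. K xdag \<bullet> u j)"
  shows "\<exists>kpr::nat.
           k_pr (\<lambda>j. K xdag \<bullet> u j + \<delta> * Z j) (\<lambda>j. K xdag \<bullet> u j) = enat kpr \<and>
           (\<Sum>j\<in>{j. k_dp \<tau> \<delta> (\<lambda>j. K xdag \<bullet> u j + \<delta> * Z j) < enat j \<and> j \<le> kpr}.
               (K xdag \<bullet> u j)\<^sup>2)
             \<le> (3 * \<tau> + 1)\<^sup>2 / 4 * real kpr * \<delta>\<^sup>2"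
proof -
  have "summable (\<lambda>j. (K xdag \<bullet> u (Suc j))\<^sup>2)"
    using u_basis[of "K xdag"] by (rule sums_summable)
  from k_dp_signal_bound[OF this \<delta>_pos \<tau>_gt \<kappa>_ge kbar event]
  show ?thesis .
qed

end
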